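(* Let $L(x|t_j)$ and $L'(x|t_j)$ be the operators defined in the context. Then on $V(x_i)\otimes V(x_{i'})\otimes V(t_j)$ $$R_{12}(x_i\ominus x_{i'})L_{13}(x_i|t_j)L_{23}(x_{i'}|t_j)=L_{23}(x_{i'}|t_j)L_{13}(x_i|t_j)R_{12}(x_i\ominus x_{i'}),$$ and the same identity holds with $L$ replaced by $L'$ and $R$ replaced by $R'$; and on $V(x_i)\otimes V(t_j)\otimes V(t_{j'})$ $$r_{23}(t_j\ominus t_{j'})L_{12}(x_i|t_j)L_{13}(x_i|t_{j'})=L_{13}(x_i|t_{j'})L_{12}(x_i|t_j)r_{23}(t_j\ominus t_{j'}),$$ and the same identity holds with $L$ replaced by $L'$ and the same $r$. Here $R,R',r$ are $4\times 4$ matrices, in the basis $v_0\otimes v_0,v_0\otimes v_1,v_1\otimes v_0,v_1\otimes v_1$, of the form $$\begin{pmatrix}a&0&0&0\\0&b&c&0\\0&c'&b'&0\\0&0&0&a'\end{pmatrix}$$ with entries: for $R$: $a=1,b=0,c=1,c'=1+\beta\, x_{i'}\ominus x_i,\ b'=x_{i'}\ominus x_i,\ a'=1$; for $R'$: $a=1,b=x_i\ominus x_{i'},c=1,c'=1+\beta\,x_i\ominus x_{i'},b'=0,a'=1$; for $r$: $a=1,b=0,c=1+\beta\,t_j\ominus t_{j'},c'=1,b'=t_j\ominus t_{j'},a'=1$.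
   Context: $\beta$ is an indeterminate, $x\oplus y=x+y+\beta xy$, $x\ominus y=(x-y)/(1+\beta y)$. $V=\mathbb{Z}v_0\oplus\mathbb{Z}v_1$, and $V(z)$ denotes $V$ with scalars extended to rational functions in $\beta$ and $z$. Let $\sigma^-v_1=v_0,\ \sigma^-v_0=0,\ \sigma^+v_0=v_1,\ \sigma^+v_1=0$. With $e_{ab}$ ($a,b\in\{0,1\}$) the matrix units on the first factor ($e_{ab}v_b=v_a$), the operators on $V(x)\otimes V(t_j)$ are $L=\sum_{a,b}e_{ab}\otimes L_{ab}$ with $L_{00}=\sigma^+\sigma^-+(x\ominus t_j)\sigma^-\sigma^+$, $L_{01}=(1+\beta\,x\ominus t_j)\sigma^+$, $L_{10}=\sigma^-$, $L_{11}=\sigma^-\sigma^+$; and $L'=\sum e_{ab}\otimes L'_{ab}$ with $L'_{00}=\sigma^-\sigma^++(x\oplus t_j)\sigma^+\sigma^-$, $L'_{01}=\sigma^+$, $L'_{10}=(1+\beta\,x\oplus t_j)\sigma^-$, $L'_{11}=\sigma^+\sigma^-$. Subscripts such as $L_{13}$ indicate on which tensor factors of a triple tensor product the operator acts. *)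

theory Defs
  imports Main
begin

text \<open>Scalars: an arbitrary field; the indeterminates beta, x, t are field elements
  (rational-function identities are stated pointwise, with nonvanishing denominators).
  Basis of V: index False = v0, True = v1.  Operators are given by matrix entries
  M out in.\<close>

definition oplus :: "'a::field \<Rightarrow> 'a \<Rightarrow> 'a \<Rightarrow> 'a" where
  "oplus \<beta> x y = x + y + \<beta> * x * y"

definition ominus :: "'a::field \<Rightarrow> 'a \<Rightarrow> 'a \<Rightarrow> 'a" where
  "ominus \<beta> x y = (x - y) / (1 + \<beta> * y)"

type_synonym 'a op1 = "bool \<Rightarrow> bool \<Rightarrow> 'a"
type_synonym 'a op2 = "bool \<times> bool \<Rightarrow> bool \<times> bool \<Rightarrow> 'a"
type_synonym 'a op3 = "bool \<times> bool \<times> bool \<Rightarrow> bool \<times> bool \<times> bool \<Rightarrow> 'a"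

definition sigma_plus :: "'a::field op1" where
  "sigma_plus = (\<lambda>i j. if i \<and> \<not> j then 1 else 0)"

definition sigma_minus :: "'a::field op1" where
  "sigma_minus = (\<lambda>i j. if \<not> i \<and> j then 1 else 0)"

definition mul1 :: "'a::field op1 \<Rightarrow> 'a op1 \<Rightarrow> 'a op1" where
  "mul1 A B = (\<lambda>i k. \<Sum>j\<in>UNIV. A i j * B j k)"

definition add1 :: "'a::field op1 \<Rightarrow> 'a op1 \<Rightarrow> 'a op1" where
  "add1 A B = (\<lambda>i j. A i j + B i j)"

definition smult1 :: "'a::field \<Rightarrow> 'a op1 \<Rightarrow> 'a op1" where
  "smult1 c A = (\<lambda>i j. c * A i j)"

definition mul3 :: "'a::field op3 \<Rightarrow> 'a op3 \<Rightarrow> 'a op3" where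
  "mul3 A B = (\<lambda>i k. \<Sum>j\<in>UNIV. A i j * B j k)"

text \<open>The operator sum_{a,b} e_ab (x) M_ab on V (x) V, given the components M a b.\<close>
definition from_units :: "(bool \<Rightarrow> bool \<Rightarrow> 'a op1) \<Rightarrow> 'a op2" where
  "from_units M = (\<lambda>(a, c) (b, d). M a b c d)"

definition L_comp :: "'a::field \<Rightarrow> 'a \<Rightarrow> 'a \<Rightarrow> bool \<Rightarrow> bool \<Rightarrow> 'a op1" where
  "L_comp \<beta> x t a b =
     (if \<not> a \<and> \<not> b then add1 (mul1 sigma_plus sigma_minus)
                              (smult1 (ominus \<beta> x t) (mul1 sigma_minus sigma_plus))
      else if \<not> a \<and> b then smult1 (1 + \<beta> * ominus \<beta> x t) sigma_plus
      else if a \<and> \<not> b then sigma_minus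
      else mul1 sigma_minus sigma_plus)"

definition L'_comp :: "'a::field \<Rightarrow> 'a \<Rightarrow> 'a \<Rightarrow> bool \<Rightarrow> bool \<Rightarrow> 'a op1" where
  "L'_comp \<beta> x t a b =
     (if \<not> a \<and> \<not> b then add1 (mul1 sigma_minus sigma_plus)
                              (smult1 (oplus \<beta> x t) (mul1 sigma_plus sigma_minus))
      else if \<not> a \<and> b then sigma_plus
      else if a \<and> \<not> b then smult1 (1 + \<beta> * oplus \<beta> x t) sigma_minus
      else mul1 sigma_plus sigma_minus)"

definition Lop :: "'a::field \<Rightarrow> 'a \<Rightarrow> 'a \<Rightarrow> 'a op2" where
  "Lop \<beta> x t = from_units (L_comp \<beta> x t)"

definition L'op :: "'a::field \<Rightarrow> 'a \<Rightarrow> 'a \<Rightarrow> 'a op2" where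
  "L'op \<beta> x t = from_units (L'_comp \<beta> x t)"

definition six_vertex :: "'a::field \<Rightarrow> 'a \<Rightarrow> 'a \<Rightarrow> 'a \<Rightarrow> 'a \<Rightarrow> 'a \<Rightarrow> 'a op2" where
  "six_vertex a b c c' b' a' = (\<lambda>i j.
     if i = (False, False) \<and> j = (False, False) then a
     else if i = (False, True) \<and> j = (False, True) then b
     else if i = (False, True) \<and> j = (True, False) then c
     else if i = (True, False) \<and> j = (False, True) then c'
     else if i = (True, False) \<and> j = (True, False) then b'
     else if i = (True, True) \<and> j = (True, True) then a'
     else 0)"

definition Rmat :: "'a::field \<Rightarrow> 'a \<Rightarrow> 'a \<Rightarrow> 'a op2" where
  "Rmat \<beta> xi xi' = six_vertex 1 0 1 (1 + \<beta> * ominus \<beta> xi' xi) (ominus \<beta> xi' xi) 1"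

definition R'mat :: "'a::field \<Rightarrow> 'a \<Rightarrow> 'a \<Rightarrow> 'a op2" where
  "R'mat \<beta> xi xi' = six_vertex 1 (ominus \<beta> xi xi') 1 (1 + \<beta> * ominus \<beta> xi xi') 0 1"

definition rmat :: "'a::field \<Rightarrow> 'a \<Rightarrow> 'a \<Rightarrow> 'a op2" where
  "rmat \<beta> tj tj' = six_vertex 1 0 (1 + \<beta> * ominus \<beta> tj tj') 1 (ominus \<beta> tj tj') 1"

definition emb12 :: "'a::field op2 \<Rightarrow> 'a op3" where
  "emb12 M = (\<lambda>(a, b, c) (a', b', c'). if c = c' then M (a, b) (a', b') else 0)"

definition emb13 :: "'a::field op2 \<Rightarrow> 'a op3" where
  "emb13 M = (\<lambda>(a, b, c) (a', b', c'). if b = b' then M (a, c) (a', c') else 0)"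

definition emb23 :: "'a::field op2 \<Rightarrow> 'a op3" where
  "emb23 M = (\<lambda>(a, b, c) (a', b', c'). if a = a' then M (b, c) (b', c') else 0)"

end

theory Submission
  imports Defs
begin

text \<open>x \<oplus> y = x + y + \<beta> x y is a commutative group law on {x. 1 + \<beta> x \<noteq> 0}, with
  \<ominus> as its subtraction. Hence the spectral parameters satisfy the additive laws
  (y \<ominus> t) = (y \<ominus> x) \<oplus> (x \<ominus> t) and (x \<oplus> t) = (x \<ominus> y) \<oplus> (y \<oplus> t), and each
  RLL relation is an entrywise identity of 8\<times>8 matrices that holds as soon as the parameters
  of R and of the two L-operators satisfy the corresponding additive law.\<close>

lemma oplus_commute: "oplus \<beta> x y = oplus \<beta> y x"
  by (simp add: oplus_def algebra_simps)

lemma oplus_assoc: "oplus \<beta> (oplus \<beta> x y) z = oplus \<beta> x (oplus \<beta> y z)"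
  by (simp add: oplus_def algebra_simps)

lemma ominus_oplus_cancel:
  assumes "1 + \<beta> * y \<noteq> 0"
  shows "oplus \<beta> (ominus \<beta> x y) y = x"
proof -
  have "oplus \<beta> (ominus \<beta> x y) y = ominus \<beta> x y * (1 + \<beta> * y) + y"
    by (simp add: oplus_def algebra_simps)
  also have "\<dots> = x" using assms by (simp add: ominus_def)
  finally show ?thesis .
qed

lemma oplus_right_cancel:
  assumes "oplus \<beta> a t = oplus \<beta> b t" and "1 + \<beta> * t \<noteq> 0"
  shows "a = b"
proof -
  have "a * (1 + \<beta> * t) = b * (1 + \<beta> * t)"
    using assms(1) by (simp add: oplus_def algebra_simps)
  then show ?thesis using assms(2) by simp
qed

lemma ominus_chain:
  assumes "1 + \<beta> * x \<noteq> 0" and "1 + \<beta> * t \<noteq> 0"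
  shows "ominus \<beta> y t = oplus \<beta> (ominus \<beta> y x) (ominus \<beta> x t)"
proof (rule oplus_right_cancel[OF _ assms(2)])
  show "oplus \<beta> (ominus \<beta> y t) t = oplus \<beta> (oplus \<beta> (ominus \<beta> y x) (ominus \<beta> x t)) t"
    using assms by (simp add: oplus_assoc ominus_oplus_cancel)
qed

lemma oplus_ominus_chain:
  assumes "1 + \<beta> * y \<noteq> 0"
  shows "oplus \<beta> x t = oplus \<beta> (ominus \<beta> x y) (oplus \<beta> y t)"
  using assms by (simp add: oplus_assoc[symmetric] ominus_oplus_cancel)

lemma sum_UNIV_bool3:
  "(\<Sum>j\<in>UNIV. f j) =
     f (False,False,False) + f (False,False,True) + f (False,True,False) + f (False,True,True) +
     f (True,False,False) + f (True,False,True) + f (True,True,False) + f (True,True,True)"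
  by (simp add: UNIV_Times_UNIV[symmetric] sum.cartesian_product[symmetric] UNIV_bool add.assoc
           del: UNIV_Times_UNIV)

lemma op3_eqI:
  "(\<And>a b c a' b' c'. A (a, b, c) (a', b', c') = B (a, b, c) (a', b', c')) \<Longrightarrow> A = B"
  by (intro ext) auto

lemmas matrix_entry_simps = mul3_def sum_UNIV_bool3 emb12_def emb13_def emb23_def
  Lop_def L'op_def from_units_def L_comp_def L'_comp_def add1_def smult1_def mul1_def
  UNIV_bool sigma_plus_def sigma_minus_def Rmat_def R'mat_def rmat_def six_vertex_def

lemma RLL_Lop:
  fixes \<beta> xi xi' tj :: "'a::field"
  assumes "ominus \<beta> xi' tj = oplus \<beta> (ominus \<beta> xi' xi) (ominus \<beta> xi tj)"
  shows "mul3 (mul3 (emb12 (Rmat \<beta> xi xi')) (emb13 (Lop \<beta> xi tj))) (emb23 (Lop \<beta> xi' tj))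
         = mul3 (mul3 (emb23 (Lop \<beta> xi' tj)) (emb13 (Lop \<beta> xi tj))) (emb12 (Rmat \<beta> xi xi'))"
    (is "?A = ?B")
proof (rule op3_eqI)
  fix a b c a' b' c'
  show "?A (a, b, c) (a', b', c') = ?B (a, b, c) (a', b', c')"
    by (cases a; cases b; cases c; cases a'; cases b'; cases c')
       (simp_all add: matrix_entry_simps assms oplus_def algebra_simps)
qed

lemma RLL_L'op:
  fixes \<beta> xi xi' tj :: "'a::field"
  assumes "oplus \<beta> xi tj = oplus \<beta> (ominus \<beta> xi xi') (oplus \<beta> xi' tj)"
  shows "mul3 (mul3 (emb12 (R'mat \<beta> xi xi')) (emb13 (L'op \<beta> xi tj))) (emb23 (L'op \<beta> xi' tj))
         = mul3 (mul3 (emb23 (L'op \<beta> xi' tj)) (emb13 (L'op \<beta> xi tj))) (emb12 (R'mat \<beta> xi xi'))"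
    (is "?A = ?B")
proof (rule op3_eqI)
  fix a b c a' b' c'
  show "?A (a, b, c) (a', b', c') = ?B (a, b, c) (a', b', c')"
    by (cases a; cases b; cases c; cases a'; cases b'; cases c')
       (simp_all add: matrix_entry_simps assms oplus_def[of _ "ominus \<beta> xi xi'"] algebra_simps)
    \<comment> \<open>only the right-hand side of the hypothesis is unfolded, so that it still rewrites
      the atom oplus \<beta> xi tj occurring in the entries\<close>
qed

lemma rLL_Lop:
  fixes \<beta> xi tj tj' :: "'a::field"
  assumes "ominus \<beta> xi tj' = oplus \<beta> (ominus \<beta> xi tj) (ominus \<beta> tj tj')"
  shows "mul3 (mul3 (emb23 (rmat \<beta> tj tj')) (emb12 (Lop \<beta> xi tj))) (emb13 (Lop \<beta> xi tj'))
         = mul3 (mul3 (emb13 (Lop \<beta> xi tj')) (emb12 (Lop \<beta> xi tj))) (emb23 (rmat \<beta> tj tj'))"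
    (is "?A = ?B")
proof (rule op3_eqI)
  fix a b c a' b' c'
  show "?A (a, b, c) (a', b', c') = ?B (a, b, c) (a', b', c')"
    by (cases a; cases b; cases c; cases a'; cases b'; cases c')
       (simp_all add: matrix_entry_simps assms oplus_def algebra_simps)
qed

lemma rLL_L'op:
  fixes \<beta> xi tj tj' :: "'a::field"
  assumes "oplus \<beta> xi tj = oplus \<beta> (oplus \<beta> xi tj') (ominus \<beta> tj tj')"
  shows "mul3 (mul3 (emb23 (rmat \<beta> tj tj')) (emb12 (L'op \<beta> xi tj))) (emb13 (L'op \<beta> xi tj'))
         = mul3 (mul3 (emb13 (L'op \<beta> xi tj')) (emb12 (L'op \<beta> xi tj))) (emb23 (rmat \<beta> tj tj'))"
    (is "?A = ?B")
proof (rule op3_eqI)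
  fix a b c a' b' c'
  show "?A (a, b, c) (a', b', c') = ?B (a, b, c) (a', b', c')"
    by (cases a; cases b; cases c; cases a'; cases b'; cases c')
       (simp_all add: matrix_entry_simps assms oplus_def[of _ "oplus \<beta> xi tj'"] algebra_simps)
qed

theorem mainTheorem3:
  fixes \<beta> xi xi' tj tj' :: "'a::field"
  assumes "1 + \<beta> * xi \<noteq> 0" and "1 + \<beta> * xi' \<noteq> 0"
    and "1 + \<beta> * tj \<noteq> 0" and "1 + \<beta> * tj' \<noteq> 0"
  shows "(mul3 (mul3 (emb12 (Rmat \<beta> xi xi')) (emb13 (Lop \<beta> xi tj))) (emb23 (Lop \<beta> xi' tj))
         = mul3 (mul3 (emb23 (Lop \<beta> xi' tj)) (emb13 (Lop \<beta> xi tj))) (emb12 (Rmat \<beta> xi xi'))) \<and>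
        (mul3 (mul3 (emb12 (R'mat \<beta> xi xi')) (emb13 (L'op \<beta> xi tj))) (emb23 (L'op \<beta> xi' tj))
         = mul3 (mul3 (emb23 (L'op \<beta> xi' tj)) (emb13 (L'op \<beta> xi tj))) (emb12 (R'mat \<beta> xi xi'))) \<and>
        (mul3 (mul3 (emb23 (rmat \<beta> tj tj')) (emb12 (Lop \<beta> xi tj))) (emb13 (Lop \<beta> xi tj'))
         = mul3 (mul3 (emb13 (Lop \<beta> xi tj')) (emb12 (Lop \<beta> xi tj))) (emb23 (rmat \<beta> tj tj'))) \<and>
        (mul3 (mul3 (emb23 (rmat \<beta> tj tj')) (emb12 (L'op \<beta> xi tj))) (emb13 (L'op \<beta> xi tj'))
         = mul3 (mul3 (emb13 (L'op \<beta> xi tj')) (emb12 (L'op \<beta> xi tj))) (emb23 (rmat \<beta> tj tj')))"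
proof -
  have "oplus \<beta> xi tj = oplus \<beta> (oplus \<beta> xi tj') (ominus \<beta> tj tj')"
    using oplus_ominus_chain[OF assms(4), where x = tj and t = xi] by (simp add: oplus_commute)
  then show ?thesis
    using RLL_Lop[OF ominus_chain[OF assms(1,3)]] RLL_L'op[OF oplus_ominus_chain[OF assms(2)]]
      rLL_Lop[OF ominus_chain[OF assms(3,4)]] rLL_L'op
    by blast
qed

end
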